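(* Let $n\ge 2$ and let $A\in\mathbb{R}^{n\times n}$ be a nonnegative hollow tridiagonal matrix (so $A_{ii}=0$ for all $i$ and $A_{ij}=0$ when $|i-j|>1$) such that $A_{i,i+1}A_{i+1,i}=0$ for each $i\in\{1,\dots,n-1\}$, and $A_{i,i+1}>0$ for at least one $i$. Then $r(t):=r\big((1-t)A+tA^{\top}\big)$ is strictly concave in $t$ on $(0,1)$.
   Context: $r(M)$ denotes the spectral radius of a square matrix $M$. *)

theory Defs
  imports "HOL-Analysis.Convex" "Jordan_Normal_Form.Spectral_Radius"
begin

definition strict_concave_on :: "real set \<Rightarrow> (real \<Rightarrow> real) \<Rightarrow> bool" where
  "strict_concave_on S f \<longleftrightarrow> convex S \<and>
     (\<forall>x\<in>S. \<forall>y\<in>S. x \<noteq> y \<longrightarrow> (\<forall>u::real. 0 < u \<and> u < 1 \<longrightarrow>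
        f (u * x + (1 - u) * y) > u * f x + (1 - u) * f y))"

definition real_spectral_radius :: "real mat \<Rightarrow> real" where
  "real_spectral_radius M = spectral_radius (map_mat complex_of_real M)"

end

theory Submission
  imports Defs
begin

text \<open>For \<open>0 < t < 1\<close> the matrix \<open>M\<^sub>t = (1 - t) A + t A\<^sup>T\<close> is tridiagonal, and since at most
  one of \<open>a = A\<^sub>i\<^sub>,\<^sub>i\<^sub>+\<^sub>1\<close>, \<open>b = A\<^sub>i\<^sub>+\<^sub>1\<^sub>,\<^sub>i\<close> is nonzero, the product of its two
  entries in positions \<open>(i, i+1)\<close> and \<open>(i+1, i)\<close> is \<open>t (1 - t) (a + b)\<^sup>2\<close>, vanishing only
  when both entries vanish. A diagonal similarity turns such a tridiagonal matrix into the
  symmetric one whose off-diagonal entries are the square roots of these products, here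
  \<open>sqrt (t (1 - t)) (A + A\<^sup>T)\<close>. Hence \<open>r(t) = sqrt (t (1 - t)) r(A + A\<^sup>T)\<close>, and
  \<open>r(A + A\<^sup>T) > 0\<close>: a positive diagonal entry of \<open>(A + A\<^sup>T)\<^sup>2\<close> makes the powers of a
  suitable multiple of \<open>A + A\<^sup>T\<close> grow geometrically, which is impossible for spectral
  radius below 1. Strict concavity of \<open>sqrt (t (1 - t))\<close> then gives the claim.\<close>

definition nonneg_mat :: "real mat \<Rightarrow> bool" where
  "nonneg_mat M \<longleftrightarrow> (\<forall>i<dim_row M. \<forall>j<dim_col M. 0 \<le> M $$ (i, j))"

lemma nonneg_mat_mult:
  assumes "X \<in> carrier_mat n m" "Y \<in> carrier_mat m k" "nonneg_mat X" "nonneg_mat Y"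
  shows "nonneg_mat (X * Y)"
  using assms unfolding nonneg_mat_def by (auto simp: scalar_prod_def intro!: sum_nonneg)

lemma nonneg_mat_pow:
  assumes "M \<in> carrier_mat n n" "nonneg_mat M"
  shows "nonneg_mat (M ^\<^sub>m k)"
proof (induction k)
  case (Suc k)
  show ?case using nonneg_mat_mult[OF pow_carrier_mat[OF assms(1)] assms(1) Suc assms(2)] by simp
qed (use assms in \<open>auto simp: nonneg_mat_def\<close>)

lemma nonneg_mat_mult_entry_ge:
  assumes "X \<in> carrier_mat n n" "Y \<in> carrier_mat n n" "nonneg_mat X" "nonneg_mat Y"
    and "i < n" "j < n" "l < n"
  shows "X $$ (i, l) * Y $$ (l, j) \<le> (X * Y) $$ (i, j)"
proof -
  have "X $$ (i, l) * Y $$ (l, j) \<le> (\<Sum>l'\<in>{0..<n}. X $$ (i, l') * Y $$ (l', j))"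
    using assms unfolding nonneg_mat_def
    by (intro member_le_sum[where f = "\<lambda>l'. X $$ (i, l') * Y $$ (l', j)"]) auto
  also have "\<dots> = (X * Y) $$ (i, j)"
    using assms by (simp add: scalar_prod_def)
  finally show ?thesis .
qed

lemma nonneg_mat_pow_diag_ge:
  assumes M: "M \<in> carrier_mat n n" and nonneg: "nonneg_mat M" and i: "i < n"
  shows "M $$ (i, i) ^ k \<le> (M ^\<^sub>m k) $$ (i, i)"
proof (induction k)
  case 0
  show ?case using M i by simp
next
  case (Suc k)
  have "M $$ (i, i) ^ Suc k \<le> (M ^\<^sub>m k) $$ (i, i) * M $$ (i, i)"
    using Suc nonneg M i unfolding nonneg_mat_def by (simp add: mult.commute mult_left_mono)
  also have "\<dots> \<le> (M ^\<^sub>m Suc k) $$ (i, i)"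
    using nonneg_mat_mult_entry_ge[OF pow_carrier_mat[OF M] M nonneg_mat_pow[OF M nonneg] nonneg i i i]
    by simp
  finally show ?case .
qed

lemma pow_mat_add:
  assumes "A \<in> carrier_mat n n"
  shows "A ^\<^sub>m (k + l) = A ^\<^sub>m k * A ^\<^sub>m l"
  by (induction l) (use assms in \<open>auto simp: assoc_mult_mat[of _ n n _ n _ n]\<close>)

lemma pow_mat_mult:
  assumes "A \<in> carrier_mat n n"
  shows "A ^\<^sub>m (m * k) = (A ^\<^sub>m m) ^\<^sub>m k"
proof (induction k)
  case (Suc k)
  have "A ^\<^sub>m (m * Suc k) = A ^\<^sub>m (m * k) * A ^\<^sub>m m"
    by (metis pow_mat_add[OF assms] mult_Suc_right add.commute)
  then show ?case using Suc by simp
qed (use assms in auto)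

lemma pow_mat_smult:
  fixes c :: "'a :: comm_semiring_1"
  assumes "A \<in> carrier_mat n n"
  shows "(c \<cdot>\<^sub>m A) ^\<^sub>m k = c ^ k \<cdot>\<^sub>m A ^\<^sub>m k"
proof (induction k)
  case (Suc k)
  have "(c \<cdot>\<^sub>m A) ^\<^sub>m Suc k = c ^ k \<cdot>\<^sub>m A ^\<^sub>m k * (c \<cdot>\<^sub>m A)"
    using Suc by simp
  also have "\<dots> = c \<cdot>\<^sub>m (c ^ k \<cdot>\<^sub>m (A ^\<^sub>m k * A))"
    using mult_smult_distrib[of "c ^ k \<cdot>\<^sub>m A ^\<^sub>m k" n n A n c]
      mult_smult_assoc_mat[of "A ^\<^sub>m k" n n A n "c ^ k"] assms by simp
  also have "\<dots> = c ^ Suc k \<cdot>\<^sub>m A ^\<^sub>m Suc k"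
    by (rule eq_matI) (auto simp: mult.assoc)
  finally show ?case .
qed (use assms in auto)

lemma nonneg_mat_pow2_diag_ge:
  assumes B: "B \<in> carrier_mat n n" and nonneg: "nonneg_mat B" and "i < n" "j < n"
  shows "B $$ (i, j) * B $$ (j, i) \<le> (B ^\<^sub>m 2) $$ (i, i)"
  using nonneg_mat_mult_entry_ge[OF B B nonneg nonneg assms(3,3,4)] B by (simp add: numeral_2_eq_2)

lemma smult_mat_mult_vec:
  fixes c :: "'a :: comm_semiring_0"
  assumes "B \<in> carrier_mat n m" "v \<in> carrier_vec m"
  shows "(c \<cdot>\<^sub>m B) *\<^sub>v v = c \<cdot>\<^sub>v (B *\<^sub>v v)"
  using assms by (intro eq_vecI) (auto simp: scalar_prod_def sum_distrib_left mult.assoc)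

lemma eigenvector_smult_mat:
  fixes c :: "'a :: field"
  assumes B: "B \<in> carrier_mat n n" and c: "c \<noteq> 0"
  shows "eigenvector (c \<cdot>\<^sub>m B) v (c * k) \<longleftrightarrow> eigenvector B v k"
proof -
  have "(c \<cdot>\<^sub>m B) *\<^sub>v v = (c * k) \<cdot>\<^sub>v v \<longleftrightarrow> B *\<^sub>v v = k \<cdot>\<^sub>v v" if v: "v \<in> carrier_vec n"
  proof
    assume "(c \<cdot>\<^sub>m B) *\<^sub>v v = (c * k) \<cdot>\<^sub>v v"
    then have "inverse c \<cdot>\<^sub>v (c \<cdot>\<^sub>v (B *\<^sub>v v)) = inverse c \<cdot>\<^sub>v (c \<cdot>\<^sub>v (k \<cdot>\<^sub>v v))"
      by (simp add: smult_mat_mult_vec[OF B v] smult_smult_assoc)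
    then show "B *\<^sub>v v = k \<cdot>\<^sub>v v"
      using c by (simp add: smult_smult_assoc mult.assoc[symmetric])
  qed (simp add: smult_mat_mult_vec[OF B v] smult_smult_assoc)
  then show ?thesis
    using B unfolding eigenvector_def by auto
qed

lemma spectrum_smult_mat:
  fixes c :: "'a :: field"
  assumes "B \<in> carrier_mat n n" and c: "c \<noteq> 0"
  shows "spectrum (c \<cdot>\<^sub>m B) = (\<lambda>x. c * x) ` spectrum B"
proof -
  have "x \<in> spectrum (c \<cdot>\<^sub>m B) \<longleftrightarrow> x / c \<in> spectrum B" for x
    using eigenvector_smult_mat[OF assms, of _ "x / c"] c
    unfolding spectrum_def eigenvalue_def by simp
  then show ?thesis
    using c by (force simp: image_iff)
qed

lemma spectral_radius_smult_mat:
  assumes B: "B \<in> carrier_mat n n" and c: "c \<noteq> 0" and n: "0 < n"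
  shows "spectral_radius (c \<cdot>\<^sub>m B) = norm c * spectral_radius B"
proof -
  have "norm ` spectrum (c \<cdot>\<^sub>m B) = (\<lambda>y. norm c * y) ` norm ` spectrum B"
    unfolding spectrum_smult_mat[OF B c] image_image by (simp add: norm_mult)
  moreover have "mono (\<lambda>y. norm c * y)"
    by (intro monoI mult_left_mono) auto
  moreover have "finite (norm ` spectrum B)" "norm ` spectrum B \<noteq> {}"
    using card_finite_spectrum[OF B] spectrum_non_empty[OF B n] by auto
  ultimately show ?thesis
    unfolding spectral_radius_def by (metis mono_Max_commute)
qed

lemma real_spectral_radius_smult:
  assumes "B \<in> carrier_mat n n" "c \<noteq> 0" "0 < n"
  shows "real_spectral_radius (c \<cdot>\<^sub>m B) = \<bar>c\<bar> * real_spectral_radius B"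
proof -
  have "map_mat complex_of_real (c \<cdot>\<^sub>m B) = complex_of_real c \<cdot>\<^sub>m map_mat complex_of_real B"
    by (rule eq_matI) auto
  then show ?thesis
    unfolding real_spectral_radius_def
    using spectral_radius_smult_mat[of "map_mat complex_of_real B" n "complex_of_real c"] assms
    by simp
qed

lemma real_spectral_radius_similar:
  assumes "similar_mat A B"
  shows "real_spectral_radius A = real_spectral_radius B"
proof -
  obtain n where A: "A \<in> carrier_mat n n" and B: "B \<in> carrier_mat n n"
    using similar_matD[OF assms] by auto
  have "char_poly (map_mat complex_of_real A) = char_poly (map_mat complex_of_real B)"
    by (metis char_poly_similar[OF assms] of_real_hom.char_poly_hom[OF A] of_real_hom.char_poly_hom[OF B])
  then have "spectrum (map_mat complex_of_real A) = spectrum (map_mat complex_of_real B)"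
    using spectrum_root_char_poly[of "map_mat complex_of_real A" n]
      spectrum_root_char_poly[of "map_mat complex_of_real B" n] A B by simp
  then show ?thesis
    unfolding real_spectral_radius_def spectral_radius_def by simp
qed

lemma real_spectral_radius_ge_1:
  assumes M: "M \<in> carrier_mat n n" and nonneg: "nonneg_mat M" and i: "i < n"
    and gt: "1 < (M ^\<^sub>m m) $$ (i, i)"
  shows "1 \<le> real_spectral_radius M"
proof (rule ccontr)
  let ?C = "map_mat complex_of_real M"
  assume "\<not> 1 \<le> real_spectral_radius M"
  then obtain K where K: "\<And>k. norm_bound (?C ^\<^sub>m k) K"
    using spectral_radius_jnf_norm_bound_less_1_upper_triangular[of ?C n] M
    unfolding real_spectral_radius_def by fastforce
  obtain k where "K < (M ^\<^sub>m m) $$ (i, i) ^ k"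
    using real_arch_pow[OF gt] by blast
  also have "\<dots> \<le> ((M ^\<^sub>m m) ^\<^sub>m k) $$ (i, i)"
    using nonneg_mat_pow_diag_ge[OF pow_carrier_mat[OF M] nonneg_mat_pow[OF M nonneg] i] .
  also have "\<dots> = norm ((?C ^\<^sub>m (m * k)) $$ (i, i))"
    using M i nonneg_mat_pow[OF M nonneg, of "m * k"] unfolding nonneg_mat_def
    by (simp add: of_real_hom.mat_hom_pow[OF M, symmetric] pow_mat_mult[OF M])
  also have "\<dots> \<le> K"
    using K[of "m * k"] M i unfolding norm_bound_def by simp
  finally show False by simp
qed

lemma real_spectral_radius_pos:
  assumes M: "M \<in> carrier_mat n n" and nonneg: "nonneg_mat M" and i: "i < n"
    and m: "0 < m" and pos: "0 < (M ^\<^sub>m m) $$ (i, i)"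
  shows "0 < real_spectral_radius M"
proof -
  define c where "c = root m (2 / (M ^\<^sub>m m) $$ (i, i))"
  have c: "0 < c" "c ^ m * (M ^\<^sub>m m) $$ (i, i) = 2"
    using m pos unfolding c_def by (simp_all add: real_root_pow_pos)
  have "1 \<le> real_spectral_radius (c \<cdot>\<^sub>m M)"
  proof (rule real_spectral_radius_ge_1)
    show "c \<cdot>\<^sub>m M \<in> carrier_mat n n"
      using M by simp
    show "nonneg_mat (c \<cdot>\<^sub>m M)"
      using nonneg c unfolding nonneg_mat_def by simp
    show "1 < ((c \<cdot>\<^sub>m M) ^\<^sub>m m) $$ (i, i)"
      using c M i by (simp add: pow_mat_smult[OF M])
  qed (rule i)
  also have "\<dots> = c * real_spectral_radius M"
    using real_spectral_radius_smult[OF M] c i by simp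
  finally show ?thesis
    using c by (smt (verit) mult_nonneg_nonpos)
qed

definition tridiagonal_mat :: "'a :: zero mat \<Rightarrow> bool" where
  "tridiagonal_mat M \<longleftrightarrow>
     (\<forall>i<dim_row M. \<forall>j<dim_col M. i + 1 < j \<or> j + 1 < i \<longrightarrow> M $$ (i, j) = 0)"

definition symmetrize_tridiagonal :: "real mat \<Rightarrow> real mat" where
  "symmetrize_tridiagonal M = mat (dim_row M) (dim_col M) (\<lambda>(i, j).
     if j = i + 1 \<or> i = j + 1 then sqrt (M $$ (i, j) * M $$ (j, i)) else M $$ (i, j))"

lemma similar_mat_diag_scaling:
  fixes d :: "nat \<Rightarrow> 'a :: field"
  assumes S: "S \<in> carrier_mat n n" and M: "M \<in> carrier_mat n n" and d: "\<And>i. d i \<noteq> 0"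
    and entry: "\<And>i j. i < n \<Longrightarrow> j < n \<Longrightarrow> d i * M $$ (i, j) / d j = S $$ (i, j)"
  shows "similar_mat S M"
proof (rule similar_matI)
  let ?P = "mat_diag n d" and ?Q = "mat_diag n (\<lambda>i. 1 / d i)"
  show "{S, M, ?P, ?Q} \<subseteq> carrier_mat n n"
    using S M by auto
  show "?P * ?Q = 1\<^sub>m n" "?Q * ?P = 1\<^sub>m n"
    using d by simp_all
  have "?P * M * ?Q = mat n n (\<lambda>(i, j). d i * M $$ (i, j) * (1 / d j))"
    unfolding mat_diag_mult_left[OF M]
    by (subst mat_diag_mult_right[of _ n n]) (auto intro!: eq_matI)
  then show "S = ?P * M * ?Q"
    using S entry by (auto intro!: eq_matI)
qed

lemma similar_mat_symmetrize_tridiagonal: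
  fixes M :: "real mat"
  assumes M: "M \<in> carrier_mat n n" and tri: "tridiagonal_mat M"
    and pairs: "\<And>i. i + 1 < n \<Longrightarrow>
      0 < M $$ (i, i + 1) * M $$ (i + 1, i) \<or> M $$ (i, i + 1) = 0 \<and> M $$ (i + 1, i) = 0"
  shows "similar_mat (symmetrize_tridiagonal M) M"
proof -
  let ?p = "\<lambda>i. M $$ (i, i + 1) * M $$ (i + 1, i)"
  \<comment> \<open>\<open>d (i + 1) / d i\<close> is chosen so that conjugation by \<open>diag d\<close> turns \<open>M\<^sub>i\<^sub>,\<^sub>i\<^sub>+\<^sub>1\<close> into \<open>sqrt (?p i)\<close>.\<close>
  define d where "d i = (\<Prod>l<i. if 0 < ?p l then M $$ (l, l + 1) / sqrt (?p l) else 1)" for i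
  have d_Suc: "d (Suc i) = d i * (if 0 < ?p i then M $$ (i, i + 1) / sqrt (?p i) else 1)" for i
    unfolding d_def by simp
  have d_nz: "d i \<noteq> 0" for i
    unfolding d_def by (auto simp: prod_zero_iff)
  have entry: "d i * M $$ (i, j) / d j = symmetrize_tridiagonal M $$ (i, j)"
    if ij: "i < n" "j < n" for i j
  proof -
    consider "j = i + 1" | "i = j + 1" | "i = j" | "i + 1 < j \<or> j + 1 < i"
      by linarith
    then show ?thesis
    proof cases
      case 1
      then have "0 < ?p i \<or> M $$ (i, i + 1) = 0 \<and> M $$ (i + 1, i) = 0"
        using pairs ij by simp
      then show ?thesis
        using 1 ij M d_Suc[of i] d_nz[of i]
        by (auto simp: symmetrize_tridiagonal_def field_simps)
    next
      case 2
      then have "0 < ?p j \<or> M $$ (j, j + 1) = 0 \<and> M $$ (j + 1, j) = 0"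
        using pairs ij by simp
      then show ?thesis
        using 2 ij M d_Suc[of j] d_nz[of j]
        by (auto simp: symmetrize_tridiagonal_def real_div_sqrt mult.commute)
    next
      case 3
      then show ?thesis
        using ij M d_nz[of i] by (simp add: symmetrize_tridiagonal_def)
    next
      case 4
      then show ?thesis
        using ij M tri by (auto simp: symmetrize_tridiagonal_def tridiagonal_mat_def)
    qed
  qed
  show ?thesis
    by (rule similar_mat_diag_scaling[OF _ M d_nz entry])
      (use M in \<open>simp add: symmetrize_tridiagonal_def\<close>)
qed

lemma convex_comb_swap_product:
  fixes a b t :: real
  assumes "a * b = 0"
  shows "((1 - t) * a + t * b) * ((1 - t) * b + t * a) = t * (1 - t) * (a + b)\<^sup>2"
proof -
  have "((1 - t) * a + t * b) * ((1 - t) * b + t * a)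
      = t * (1 - t) * (a + b)\<^sup>2 + (1 - 2 * t)\<^sup>2 * (a * b)"
    by (simp add: power2_eq_square algebra_simps)
  then show ?thesis
    using assms by simp
qed

lemma interpolate_transpose_pair_product:
  fixes A :: "real mat"
  assumes A: "A \<in> carrier_mat n n" and i: "i + 1 < n"
    and one_way: "A $$ (i, i + 1) * A $$ (i + 1, i) = 0" and t: "0 \<le> t" "t \<le> 1"
  shows "((1 - t) \<cdot>\<^sub>m A + t \<cdot>\<^sub>m transpose_mat A) $$ (i, i + 1)
       * ((1 - t) \<cdot>\<^sub>m A + t \<cdot>\<^sub>m transpose_mat A) $$ (i + 1, i)
     = (sqrt (t * (1 - t)) * (A $$ (i, i + 1) + A $$ (i + 1, i)))\<^sup>2"
  using A i t convex_comb_swap_product[OF one_way, of t]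
  by (simp add: power_mult_distrib)

lemma symmetrize_tridiagonal_interpolate_transpose:
  fixes A :: "real mat"
  assumes A: "A \<in> carrier_mat n n"
    and nonneg: "nonneg_mat A" and hollow: "\<forall>i<n. A $$ (i, i) = 0" and tri: "tridiagonal_mat A"
    and one_way: "\<forall>i. i + 1 < n \<longrightarrow> A $$ (i, i + 1) * A $$ (i + 1, i) = 0"
    and t: "0 \<le> t" "t \<le> 1"
  shows "symmetrize_tridiagonal ((1 - t) \<cdot>\<^sub>m A + t \<cdot>\<^sub>m transpose_mat A)
       = sqrt (t * (1 - t)) \<cdot>\<^sub>m (A + transpose_mat A)"
    (is "symmetrize_tridiagonal ?M = ?s \<cdot>\<^sub>m _")
proof (rule eq_matI)
  fix i j assume "i < dim_row (?s \<cdot>\<^sub>m (A + transpose_mat A))"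
    "j < dim_col (?s \<cdot>\<^sub>m (A + transpose_mat A))"
  then have ij: "i < n" "j < n"
    using A by simp_all
  have "0 \<le> ?s * (A $$ (i, j) + A $$ (j, i))"
    using nonneg A ij t unfolding nonneg_mat_def by simp
  moreover have "?M $$ (i, j) * ?M $$ (j, i) = (?s * (A $$ (i, j) + A $$ (j, i)))\<^sup>2"
    if "j = i + 1 \<or> i = j + 1"
    using that interpolate_transpose_pair_product[OF A _ _ t] one_way ij
    by (auto simp: mult.commute add.commute)
  moreover have "A $$ (i, j) = 0 \<and> A $$ (j, i) = 0" if "\<not> (j = i + 1 \<or> i = j + 1)"
  proof -
    have "i = j \<or> i + 1 < j \<or> j + 1 < i"
      using that by linarith
    then show ?thesis
      using hollow tri A ij unfolding tridiagonal_mat_def by auto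
  qed
  ultimately show "symmetrize_tridiagonal ?M $$ (i, j) = (?s \<cdot>\<^sub>m (A + transpose_mat A)) $$ (i, j)"
    using A ij by (auto simp: symmetrize_tridiagonal_def)
qed (use A in \<open>simp_all add: symmetrize_tridiagonal_def\<close>)

lemma real_spectral_radius_interpolate_transpose:
  fixes A :: "real mat"
  assumes A: "A \<in> carrier_mat n n" and n: "0 < n"
    and nonneg: "nonneg_mat A" and hollow: "\<forall>i<n. A $$ (i, i) = 0" and tri: "tridiagonal_mat A"
    and one_way: "\<forall>i. i + 1 < n \<longrightarrow> A $$ (i, i + 1) * A $$ (i + 1, i) = 0"
    and t: "0 < t" "t < 1"
  shows "real_spectral_radius ((1 - t) \<cdot>\<^sub>m A + t \<cdot>\<^sub>m transpose_mat A)
       = sqrt (t * (1 - t)) * real_spectral_radius (A + transpose_mat A)"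
    (is "real_spectral_radius ?M = ?s * _")
proof -
  have M: "?M \<in> carrier_mat n n"
    using A by simp
  have "similar_mat (symmetrize_tridiagonal ?M) ?M"
  proof (rule similar_mat_symmetrize_tridiagonal[OF M])
    show "tridiagonal_mat ?M"
      using tri A unfolding tridiagonal_mat_def by auto
    fix i assume i: "i + 1 < n"
    have "0 \<le> A $$ (i, i + 1)" "0 \<le> A $$ (i + 1, i)"
      using nonneg A i unfolding nonneg_mat_def by auto
    then show "0 < ?M $$ (i, i + 1) * ?M $$ (i + 1, i) \<or> ?M $$ (i, i + 1) = 0 \<and> ?M $$ (i + 1, i) = 0"
      using interpolate_transpose_pair_product[OF A i _, of t] one_way i A t
      by (cases "A $$ (i, i + 1) + A $$ (i + 1, i) = 0") auto
  qed
  then have "real_spectral_radius ?M = real_spectral_radius (?s \<cdot>\<^sub>m (A + transpose_mat A))"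
    using symmetrize_tridiagonal_interpolate_transpose[OF A nonneg hollow tri one_way] t
    by (simp add: real_spectral_radius_similar)
  also have "\<dots> = ?s * real_spectral_radius (A + transpose_mat A)"
    using real_spectral_radius_smult[of "A + transpose_mat A" n ?s] A n t by simp
  finally show ?thesis .
qed

lemma strict_concave_on_subset:
  assumes "strict_concave_on S f" "T \<subseteq> S" "convex T"
  shows "strict_concave_on T f"
  using assms unfolding strict_concave_on_def by blast

lemma strict_concave_on_scaled:
  assumes g: "strict_concave_on S g" and c: "0 < c" and f: "\<And>x. x \<in> S \<Longrightarrow> f x = c * g x"
  shows "strict_concave_on S f"
  unfolding strict_concave_on_def
proof (intro conjI ballI allI impI)
  show "convex S"
    using g unfolding strict_concave_on_def by blast
  fix x y u :: real assume x: "x \<in> S" and y: "y \<in> S" and "x \<noteq> y" and u: "0 < u \<and> u < 1"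
  then have "u * g x + (1 - u) * g y < g (u * x + (1 - u) * y)"
    using g unfolding strict_concave_on_def by blast
  then have "c * (u * g x + (1 - u) * g y) < c * g (u * x + (1 - u) * y)"
    using c by (rule mult_strict_left_mono)
  moreover have "u * x + (1 - u) * y \<in> S"
    using convexD[OF \<open>convex S\<close> x y, of u "1 - u"] u by simp
  ultimately show "u * f x + (1 - u) * f y < f (u * x + (1 - u) * y)"
    using x y f by (simp add: algebra_simps)
qed

lemma strict_concave_on_sqrt_mult_one_minus:
  "strict_concave_on {0..1} (\<lambda>t. sqrt (t * (1 - t)))"
  unfolding strict_concave_on_def
proof (intro conjI ballI allI impI)
  show "convex {0..1::real}"
    by (rule convex_real_interval)
  fix x y u :: real assume x: "x \<in> {0..1}" and y: "y \<in> {0..1}" and "x \<noteq> y" and u: "0 < u \<and> u < 1"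
  define z where "z = u * x + (1 - u) * y"
  define p where "p = sqrt (x * (1 - x))"
  define q where "q = sqrt (y * (1 - y))"
  have "p * p = x * (1 - x)" "q * q = y * (1 - y)"
    using x y unfolding p_def q_def by simp_all
  have "(u * p + (1 - u) * q)\<^sup>2 = u * (p * p) + (1 - u) * (q * q) - u * (1 - u) * (p - q)\<^sup>2"
    by (simp add: power2_eq_square algebra_simps)
  also have "\<dots> \<le> u * (x * (1 - x)) + (1 - u) * (y * (1 - y))"
    using u \<open>p * p = _\<close> \<open>q * q = _\<close> by simp
  also have "\<dots> = z * (1 - z) - u * (1 - u) * (x - y)\<^sup>2"
    unfolding z_def by (simp add: power2_eq_square algebra_simps)
  also have "\<dots> < z * (1 - z)"
    using u \<open>x \<noteq> y\<close> by simp
  finally show "u * sqrt (x * (1 - x)) + (1 - u) * sqrt (y * (1 - y)) < sqrt (z * (1 - z))"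
    unfolding p_def[symmetric] q_def[symmetric] by (rule real_less_rsqrt)
qed

theorem corollary1:
  fixes A :: "real mat" and n :: nat
  assumes "n \<ge> 2"
    and "A \<in> carrier_mat n n"
    and "\<forall>i<n. \<forall>j<n. A $$ (i, j) \<ge> 0"
    and "\<forall>i<n. A $$ (i, i) = 0"
    and "\<forall>i<n. \<forall>j<n. (i + 1 < j \<or> j + 1 < i) \<longrightarrow> A $$ (i, j) = 0"
    and "\<forall>i. i + 1 < n \<longrightarrow> A $$ (i, i + 1) * A $$ (i + 1, i) = 0"
    and "\<exists>i. i + 1 < n \<and> A $$ (i, i + 1) > 0"
  shows "strict_concave_on {0<..<1}
           (\<lambda>t. real_spectral_radius ((1 - t) \<cdot>\<^sub>m A + t \<cdot>\<^sub>m transpose_mat A))"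
proof -
  have A: "A \<in> carrier_mat n n" and n: "0 < n"
    using assms(1,2) by simp_all
  have nonneg: "nonneg_mat A" and tri: "tridiagonal_mat A"
    using A assms(3,5) unfolding nonneg_mat_def tridiagonal_mat_def by auto
  define B where "B = A + transpose_mat A"
  have B: "B \<in> carrier_mat n n" and nonneg_B: "nonneg_mat B"
    using A assms(3) unfolding B_def nonneg_mat_def by auto
  obtain i where i: "i + 1 < n" "0 < A $$ (i, i + 1)"
    using assms(7) by blast
  have "0 < B $$ (i, i + 1) * B $$ (i + 1, i)"
    using i A assms(3) unfolding B_def by (simp add: add_pos_nonneg add_nonneg_pos)
  also have "\<dots> \<le> (B ^\<^sub>m 2) $$ (i, i)"
    using i by (intro nonneg_mat_pow2_diag_ge[OF B nonneg_B]) simp_all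
  finally have radius_pos: "0 < real_spectral_radius B"
    using real_spectral_radius_pos[OF B nonneg_B, of i 2] i by simp
  have sqrt_concave: "strict_concave_on {0<..<1} (\<lambda>t. sqrt (t * (1 - t)))"
    by (rule strict_concave_on_subset[OF strict_concave_on_sqrt_mult_one_minus]) auto
  show ?thesis
  proof (rule strict_concave_on_scaled[OF sqrt_concave radius_pos])
    fix t :: real assume "t \<in> {0<..<1}"
    then show "real_spectral_radius ((1 - t) \<cdot>\<^sub>m A + t \<cdot>\<^sub>m transpose_mat A)
        = real_spectral_radius B * sqrt (t * (1 - t))"
      using real_spectral_radius_interpolate_transpose[OF A n nonneg assms(4) tri assms(6)]
      by (simp add: B_def mult.commute)
  qed
qed

end
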